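(* Suppose that $u^*(t,x)$ is a strictly positive and bounded measurable function on $\mathbb{R}\times \bar D$ (i.e. $\inf_{t\in\mathbb{R},x\in\bar D}u^*(t,x)>0$ and $\sup_{t\in\mathbb{R},x\in\bar D}u^*(t,x)<\infty$), is differentiable in $t$ for each $x\in\bar D$, and satisfies $$\frac{\partial u^*}{\partial t}(t,x)=\int_D \kappa(y-x)u^*(t,y)\,dy+u^*(t,x)f(t,x,u^*(t,x)) \quad \text{for all } t\in\mathbb{R},\ x\in \bar D.$$ Then $u^*(t,x)$ is uniformly continuous in $(t,x)\in\mathbb{R}\times\bar D$, and the map $\mathbb{R}\ni t\mapsto u^*(t,\cdot)\in X$ is differentiable; hence $u^*(t,x)$ is a strictly positive bounded entire solution of the equation $\partial_t u=\int_D \kappa(y-x)u(t,y)\,dy+u f(t,x,u)$, $x\in\bar D$.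
   Context: $D\subset\mathbb{R}^N$ is a bounded domain or $D=\mathbb{R}^N$. The kernel satisfies: $\kappa\in C^1(\mathbb{R}^N,[0,\infty))$, $\kappa(0)>0$, $\int_{\mathbb{R}^N}\kappa(x)dx=1$, and there are $\mu,M>0$ with $\kappa(x)\le e^{-\mu|x|}$ and $|\nabla\kappa(x)|\le e^{-\mu|x|}$ for $|x|\ge M$. The nonlinearity satisfies: $f(t,x,u)$ is $C^1$ in $u$; $f$ and $f_u$ are uniformly continuous and bounded on $\mathbb{R}\times\bar D\times E$ for any bounded $E\subset\mathbb{R}$; $f$ is almost periodic in $t$ uniformly with respect to $x\in\bar D$ and $u$ in bounded sets, and also almost periodic in $x$ uniformly with respect to $t$ and $u$ in bounded sets when $D=\mathbb{R}^N$; $f(t,x,u)+1<0$ for all $(t,x)$ and $u\gg1$; and $\sup_{t\in\mathbb{R},x\in\bar D}f_u(t,x,u)<0$ for each $u\ge0$. $X=C^b_{\rm unif}(\bar D)$ is the space of bounded uniformly continuous functions on $\bar D$ with the sup norm. A solution on an interval $I$ means $u(t,\cdot)\in X$ for each $t\in I$ and $I\ni t\mapsto u(t,\cdot)\in X$ is differentiable; an entire solution is one defined for all $t\in\mathbb{R}$. *)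

theory Defs
  imports "HOL-Analysis.Analysis"
begin

definition admissible_domain :: "'a::euclidean_space set \<Rightarrow> bool" where
  "admissible_domain D \<longleftrightarrow> (D \<noteq> {} \<and> open D \<and> connected D \<and> bounded D) \<or> D = UNIV"

definition kernel_hyp :: "('a::euclidean_space \<Rightarrow> real) \<Rightarrow> bool" where
  "kernel_hyp \<kappa> \<longleftrightarrow>
     (\<exists>g::'a \<Rightarrow> 'a.
        (\<forall>x. (\<kappa> has_derivative (\<lambda>h. g x \<bullet> h)) (at x)) \<and> continuous_on UNIV g \<and>
        (\<forall>x. \<kappa> x \<ge> 0) \<and> \<kappa> 0 > 0 \<and>
        integrable lborel \<kappa> \<and> integral\<^sup>L lborel \<kappa> = 1 \<and>
        (\<exists>\<mu>>0. \<exists>M>0. \<forall>x. norm x \<ge> M \<longrightarrow>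
            \<kappa> x \<le> exp (- \<mu> * norm x) \<and> norm (g x) \<le> exp (- \<mu> * norm x)))"

definition almost_periodic_t :: "'a::euclidean_space set \<Rightarrow> (real \<Rightarrow> 'a \<Rightarrow> real \<Rightarrow> real) \<Rightarrow> bool" where
  "almost_periodic_t D f \<longleftrightarrow>
     (\<forall>E::real set. bounded E \<longrightarrow> (\<forall>\<epsilon>>0. \<exists>l>0. \<forall>a. \<exists>\<tau>\<in>{a..a+l}.
        \<forall>t. \<forall>x\<in>closure D. \<forall>u\<in>E. \<bar>f (t + \<tau>) x u - f t x u\<bar> < \<epsilon>))"

definition almost_periodic_x :: "(real \<Rightarrow> 'a::euclidean_space \<Rightarrow> real \<Rightarrow> real) \<Rightarrow> bool" where
  "almost_periodic_x f \<longleftrightarrow>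
     (\<forall>E::real set. bounded E \<longrightarrow> (\<forall>\<epsilon>>0. \<exists>l>0. \<forall>a::'a. \<exists>\<tau>\<in>cball a l.
        \<forall>t. \<forall>x. \<forall>u\<in>E. \<bar>f t (x + \<tau>) u - f t x u\<bar> < \<epsilon>))"

definition nonlin_hyp :: "'a::euclidean_space set \<Rightarrow> (real \<Rightarrow> 'a \<Rightarrow> real \<Rightarrow> real)
     \<Rightarrow> (real \<Rightarrow> 'a \<Rightarrow> real \<Rightarrow> real) \<Rightarrow> bool" where
  "nonlin_hyp D f fu \<longleftrightarrow>
     (\<forall>t. \<forall>x\<in>closure D. \<forall>u. ((\<lambda>v. f t x v) has_real_derivative fu t x u) (at u)) \<and>
     (\<forall>E::real set. bounded E \<longrightarrow>
        uniformly_continuous_on (UNIV \<times> closure D \<times> E) (\<lambda>(t, x, u). f t x u) \<and>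
        bounded ((\<lambda>(t, x, u). f t x u) ` (UNIV \<times> closure D \<times> E)) \<and>
        uniformly_continuous_on (UNIV \<times> closure D \<times> E) (\<lambda>(t, x, u). fu t x u) \<and>
        bounded ((\<lambda>(t, x, u). fu t x u) ` (UNIV \<times> closure D \<times> E))) \<and>
     almost_periodic_t D f \<and>
     (D = UNIV \<longrightarrow> almost_periodic_x f) \<and>
     (\<exists>U. \<forall>u\<ge>U. \<forall>t. \<forall>x\<in>closure D. f t x u + 1 < 0) \<and>
     (\<forall>u\<ge>0. (SUP (t, x)\<in>UNIV \<times> closure D. fu t x u) < 0)"

text \<open>Membership in X = bounded uniformly continuous functions on S (with sup norm).\<close>
definition in_X :: "'a::metric_space set \<Rightarrow> ('a \<Rightarrow> real) \<Rightarrow> bool" where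
  "in_X S v \<longleftrightarrow> bounded (v ` S) \<and> uniformly_continuous_on S v"

definition has_X_derivative :: "'a::metric_space set \<Rightarrow> (real \<Rightarrow> 'a \<Rightarrow> real) \<Rightarrow> ('a \<Rightarrow> real) \<Rightarrow> real \<Rightarrow> bool" where
  "has_X_derivative S U V t \<longleftrightarrow> in_X S V \<and>
     (\<forall>\<epsilon>>0. \<forall>\<^sub>F h in at 0. \<forall>x\<in>S. \<bar>(U (t + h) x - U t x) / h - V x\<bar> \<le> \<epsilon>)"

end

theory Submission
  imports Defs
begin

(* Time regularity is immediate: the right-hand side of the equation is bounded, so u is
   Lipschitz in t uniformly in x.  The real content is equicontinuity in space.  For nearby
   points x, y put w(t) = ln u(t,x) - ln u(t,y).  Its derivative is the difference of the
   kernel terms divided by u, plus f(t,x,u(t,x)) - f(t,y,u(t,y)).  The kernel term is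
   uniformly continuous in x because translation is continuous in L^1, f is uniformly
   continuous in x, and f is uniformly decreasing in u; hence whenever w exceeds a threshold m
   its derivative is at most -q < 0.  A bounded function on the whole line with this property
   never exceeds m, so |u(t,x) - u(t,y)| <= C m.  Joint uniform continuity of u, and then of
   the right-hand side, follows; the mean value theorem turns the latter into differentiability
   of t -> u(t,.) in the sup norm. *)

lemma lborel_integrable_translate:
  fixes g :: "'a::euclidean_space \<Rightarrow> 'b::{banach, second_countable_topology}"
  assumes "g \<in> borel_measurable borel"
  shows "integrable lborel (\<lambda>z. g (z + h)) \<longleftrightarrow> integrable lborel g"
  using integrable_distr_eq[of "(+) h" lborel borel g] assms
  by (simp add: lborel_distr_plus add.commute)

lemma lborel_integral_translate:
  fixes g :: "'a::euclidean_space \<Rightarrow> 'b::{banach, second_countable_topology}"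
  assumes "g \<in> borel_measurable borel"
  shows "(LINT z|lborel. g (z + h)) = (LINT z|lborel. g z)"
  using integral_distr[of "(+) h" lborel borel g] assms
  by (simp add: lborel_distr_plus add.commute)

lemma lborel_integrable_tail_small:
  fixes k :: "'a::euclidean_space \<Rightarrow> real"
  assumes k: "integrable lborel k" and "0 < \<epsilon>"
  obtains R where "(LINT z|lborel. indicator {z. R \<le> norm z} z * \<bar>k z\<bar>) < \<epsilon>"
proof -
  define T where "T n = (LINT z|lborel. indicator {z::'a. real n \<le> norm z} z * \<bar>k z\<bar>)" for n :: nat
  have "(\<lambda>n. T n) \<longlonglongrightarrow> (LINT z::'a|lborel. 0 :: real)"
    unfolding T_def
  proof (rule integral_dominated_convergence[where w = "\<lambda>z. \<bar>k z\<bar>" and f = "\<lambda>z. 0"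
      and s = "\<lambda>n z. indicator {z. real n \<le> norm z} z * \<bar>k z\<bar>"])
    show "integrable lborel (\<lambda>z. \<bar>k z\<bar>)"
      using k by (rule integrable_abs)
    then show "(\<lambda>z. indicator {z. real n \<le> norm z} z * \<bar>k z\<bar>) \<in> borel_measurable lborel" for n
      by measurable
    show "AE z in lborel. (\<lambda>n. indicator {z. real n \<le> norm z} z * \<bar>k z\<bar>) \<longlonglongrightarrow> 0"
    proof (rule AE_I2, rule tendsto_eventually)
      fix z :: 'a
      obtain N :: nat where "norm z < N"
        using reals_Archimedean2 by blast
      then show "\<forall>\<^sub>F n in sequentially. indicator {z. real n \<le> norm z} z * \<bar>k z\<bar> = 0"
        unfolding eventually_sequentially
        by (intro exI[of _ N] allI impI) (auto split: split_indicator)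
    qed
  qed (auto split: split_indicator)
  then have "\<forall>\<^sub>F n in sequentially. T n < \<epsilon>"
    using \<open>0 < \<epsilon>\<close> by (intro order_tendstoD(2)) auto
  then obtain N where "T N < \<epsilon>"
    by (auto simp: eventually_sequentially)
  then show thesis
    by (intro that[of "real N"]) (simp add: T_def)
qed

lemma L1_translation_continuous:
  fixes k :: "'a::euclidean_space \<Rightarrow> real"
  assumes k_cont: "continuous_on UNIV k" and k: "integrable lborel k" and "0 < \<epsilon>"
  obtains \<delta> where "0 < \<delta>" "\<And>h. norm h < \<delta> \<Longrightarrow> (LINT z|lborel. \<bar>k (z + h) - k z\<bar>) \<le> \<epsilon>"
proof -
  have k_meas: "k \<in> borel_measurable borel"
    using k_cont by (rule borel_measurable_continuous_onI)
  obtain R0 where tail: "(LINT z|lborel. indicator {z. R0 \<le> norm z} z * \<bar>k z\<bar>) < \<epsilon> / 4"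
    using lborel_integrable_tail_small[OF k, of "\<epsilon> / 4"] \<open>0 < \<epsilon>\<close> by auto
  define A where "A = {z::'a. R0 \<le> norm z}"
  define T where "T = (LINT z|lborel. indicator A z * \<bar>k z\<bar>)"
  define R where "R = R0 + 1"
  define V where "V = (LINT z|lborel. indicator (cball (0::'a) R) z :: real)"
  define \<eta> where "\<eta> = \<epsilon> / (4 * (V + 1))"
  have A_sets [measurable]: "A \<in> sets borel"
    unfolding A_def by measurable
  have ball_int: "integrable lborel (\<lambda>z::'a. indicator (cball 0 R) z :: real)"
    using borel_integrable_compact[of "cball (0::'a) R" "\<lambda>_. 1::real"] by simp
  have "0 \<le> V"
    unfolding V_def by (intro integral_nonneg_AE) auto
  then have "0 < \<eta>" and \<eta>V: "\<eta> * V \<le> \<epsilon> / 4"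
    using \<open>0 < \<epsilon>\<close> by (auto simp: \<eta>_def field_simps)
  have "integrable lborel (\<lambda>z. indicator A z *\<^sub>R \<bar>k z\<bar>)"
    by (rule integrable_mult_indicator) (use integrable_abs[OF k] in auto)
  then have tail_int: "integrable lborel (\<lambda>z. indicator A z * \<bar>k z\<bar>)"
    by simp
  have "uniformly_continuous_on (cball 0 (R + 1)) k"
    by (rule compact_uniformly_continuous) (auto intro: continuous_on_subset[OF k_cont])
  then obtain \<delta> where "0 < \<delta>" and \<delta>: "\<And>x y. x \<in> cball 0 (R + 1) \<Longrightarrow> y \<in> cball 0 (R + 1) \<Longrightarrow>
      dist y x < \<delta> \<Longrightarrow> dist (k y) (k x) < \<eta>"
    using \<open>0 < \<eta>\<close> unfolding uniformly_continuous_on_def by metis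
  show thesis
  proof (rule that[of "min 1 \<delta>"])
    show "0 < min 1 \<delta>"
      using \<open>0 < \<delta>\<close> by simp
    fix h :: 'a
    assume h: "norm h < min 1 \<delta>"
    define P where "P z = \<eta> * indicator (cball 0 R) z + indicator A z * \<bar>k z\<bar>
      + indicator A (z + h) * \<bar>k (z + h)\<bar>" for z
    have shifted_tail_int: "integrable lborel (\<lambda>z. indicator A (z + h) * \<bar>k (z + h)\<bar>)"
      using lborel_integrable_translate[of "\<lambda>z. indicator A z * \<bar>k z\<bar>" h] tail_int k_meas by simp
    have shifted_tail: "(LINT z|lborel. indicator A (z + h) * \<bar>k (z + h)\<bar>) = T"
      unfolding T_def using lborel_integral_translate[of "\<lambda>z. indicator A z * \<bar>k z\<bar>" h] k_meas by simp
    have P_int: "integrable lborel P"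
      unfolding P_def using ball_int tail_int shifted_tail_int by auto
    have "(LINT z|lborel. P z) = \<eta> * V + T + T"
      unfolding P_def V_def T_def using ball_int tail_int shifted_tail_int shifted_tail[unfolded T_def]
      by (simp add: Bochner_Integration.integral_add)
    have "\<bar>k (z + h) - k z\<bar> \<le> P z" for z
    proof (cases "norm z \<le> R")
      case True
      moreover have "norm (z + h) \<le> R + 1"
        using True h norm_triangle_ineq[of z h] by simp
      ultimately have "z \<in> cball 0 (R + 1)" "z + h \<in> cball 0 (R + 1)" "dist (z + h) z < \<delta>"
        using h by (simp_all only: mem_cball_0) (auto simp: dist_norm)
      then have "\<bar>k (z + h) - k z\<bar> < \<eta>"
        using \<delta> by (simp add: dist_real_def)
      moreover have "\<eta> \<le> P z"
        using True by (simp add: P_def)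
      ultimately show ?thesis
        by linarith
    next
      case False
      moreover have "norm z \<le> norm (z + h) + norm h"
        using norm_triangle_ineq4[of "z + h" h] by simp
      ultimately have "z \<in> A" "z + h \<in> A"
        using h by (auto simp: A_def R_def)
      with False show ?thesis
        using \<open>0 < \<eta>\<close> by (simp add: P_def)
    qed
    then have "(LINT z|lborel. \<bar>k (z + h) - k z\<bar>) \<le> (LINT z|lborel. P z)"
      using k k_meas P_int lborel_integrable_translate[OF k_meas] by (intro integral_mono) auto
    also have "\<dots> = \<eta> * V + T + T"
      by fact
    also have "\<dots> \<le> \<epsilon>"
      using \<eta>V tail \<open>0 < \<epsilon>\<close> unfolding T_def A_def by linarith
    finally show "(LINT z|lborel. \<bar>k (z + h) - k z\<bar>) \<le> \<epsilon>" .
  qed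
qed

definition kernel_average :: "('a::euclidean_space \<Rightarrow> real) \<Rightarrow> ('a \<Rightarrow> real) \<Rightarrow> 'a \<Rightarrow> real" where
  "kernel_average k v x = (LINT y|lborel. k (y - x) * v y)"

context
  fixes k :: "'a::euclidean_space \<Rightarrow> real"
  assumes k_meas: "k \<in> borel_measurable borel"
    and k_integrable: "integrable lborel k"
    and k_nonneg: "\<And>x. 0 \<le> k x"
    and k_integral: "integral\<^sup>L lborel k = 1"
begin

lemma kernel_shift_integrable: "integrable lborel (\<lambda>y. k (y - x))"
  using lborel_integrable_translate[OF k_meas, of "- x"] k_integrable by simp

lemma kernel_shift_integral: "(LINT y|lborel. k (y - x)) = 1"
  using lborel_integral_translate[OF k_meas, of "- x"] k_integral by simp

lemma kernel_average_integrable: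
  assumes "v \<in> borel_measurable borel" "\<And>y. \<bar>v y\<bar> \<le> B"
  shows "integrable lborel (\<lambda>y. k (y - x) * v y)"
proof (rule Bochner_Integration.integrable_bound)
  show "integrable lborel (\<lambda>y. B * k (y - x))"
    using kernel_shift_integrable by (rule integrable_mult_right)
  show "(\<lambda>y. k (y - x) * v y) \<in> borel_measurable lborel"
    using k_meas assms(1) by measurable
  have "\<bar>k (y - x) * v y\<bar> \<le> B * k (y - x)" for y
    using k_nonneg[of "y - x"] assms(2)[of y] by (simp add: abs_mult mult.commute mult_right_mono)
  then show "AE y in lborel. norm (k (y - x) * v y) \<le> norm (B * k (y - x))"
    by (intro AE_I2) (simp add: order.trans[OF _ abs_ge_self])
qed

lemma kernel_average_abs_le:
  assumes "v \<in> borel_measurable borel" "\<And>y. \<bar>v y\<bar> \<le> B"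
  shows "\<bar>kernel_average k v x\<bar> \<le> B"
proof -
  have "\<bar>kernel_average k v x\<bar> \<le> (LINT y|lborel. \<bar>k (y - x) * v y\<bar>)"
    unfolding kernel_average_def by (rule integral_abs_bound)
  also have "\<dots> \<le> (LINT y|lborel. B * k (y - x))"
  proof (rule integral_mono)
    show "integrable lborel (\<lambda>y. \<bar>k (y - x) * v y\<bar>)"
      using kernel_average_integrable[OF assms] by (rule integrable_abs)
    show "integrable lborel (\<lambda>y. B * k (y - x))"
      using kernel_shift_integrable by (rule integrable_mult_right)
    show "\<bar>k (y - x) * v y\<bar> \<le> B * k (y - x)" for y
      using k_nonneg[of "y - x"] assms(2)[of y] by (simp add: abs_mult mult.commute mult_right_mono)
  qed
  also have "\<dots> = B"
    using kernel_shift_integral by simp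
  finally show ?thesis .
qed

lemma kernel_average_nonneg: "(\<And>y. 0 \<le> v y) \<Longrightarrow> 0 \<le> kernel_average k v x"
  unfolding kernel_average_def using k_nonneg by (intro integral_nonneg_AE AE_I2) auto

lemma kernel_average_diff:
  assumes "v \<in> borel_measurable borel" "\<And>y. \<bar>v y\<bar> \<le> B"
    and "w \<in> borel_measurable borel" "\<And>y. \<bar>w y\<bar> \<le> B'"
  shows "kernel_average k v x - kernel_average k w x = kernel_average k (\<lambda>y. v y - w y) x"
  unfolding kernel_average_def
  using kernel_average_integrable[OF assms(1,2)] kernel_average_integrable[OF assms(3,4)]
  by (simp add: right_diff_distrib)

lemma kernel_average_shift_diff_le:
  assumes v_meas: "v \<in> borel_measurable borel" and v_le: "\<And>y. \<bar>v y\<bar> \<le> B"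
  shows "\<bar>kernel_average k v x - kernel_average k v y\<bar> \<le> B * (LINT z|lborel. \<bar>k (z + (x - y)) - k z\<bar>)"
proof -
  define G where "G z = (k (z - x) - k (z - y)) * v z" for z
  have G_meas: "G \<in> borel_measurable borel"
    unfolding G_def using k_meas v_meas by measurable
  have G_int: "integrable lborel G"
    unfolding G_def left_diff_distrib
    using kernel_average_integrable[OF assms, of x] kernel_average_integrable[OF assms, of y] by simp
  have shift_int: "integrable lborel (\<lambda>z. \<bar>k (z + (x - y)) - k z\<bar>)"
    using lborel_integrable_translate[OF k_meas] k_integrable by auto
  have "kernel_average k v x - kernel_average k v y = (LINT z|lborel. G z)"
    unfolding kernel_average_def G_def left_diff_distrib
    using kernel_average_integrable[OF assms, of x] kernel_average_integrable[OF assms, of y] by simp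
  also have "\<dots> = (LINT z|lborel. G (z + x))"
    using lborel_integral_translate[OF G_meas] by simp
  finally have "\<bar>kernel_average k v x - kernel_average k v y\<bar> \<le> (LINT z|lborel. \<bar>G (z + x)\<bar>)"
    by (simp add: integral_abs_bound)
  also have "\<dots> \<le> (LINT z|lborel. B * \<bar>k (z + (x - y)) - k z\<bar>)"
  proof (rule integral_mono)
    show "integrable lborel (\<lambda>z. \<bar>G (z + x)\<bar>)"
      using G_int lborel_integrable_translate[OF G_meas] by auto
    show "integrable lborel (\<lambda>z. B * \<bar>k (z + (x - y)) - k z\<bar>)"
      using shift_int by simp
    have "G (z + x) = - ((k (z + (x - y)) - k z) * v (z + x))" for z
      by (simp add: G_def algebra_simps)
    then have "\<bar>G (z + x)\<bar> = \<bar>k (z + (x - y)) - k z\<bar> * \<bar>v (z + x)\<bar>" for z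
      by (simp add: abs_mult)
    then show "\<bar>G (z + x)\<bar> \<le> B * \<bar>k (z + (x - y)) - k z\<bar>" for z
      using mult_right_mono[OF v_le abs_ge_zero] by (metis mult.commute)
  qed
  finally show ?thesis
    by simp
qed

lemma kernel_average_equicontinuous:
  assumes k_cont: "continuous_on UNIV k" and "0 < \<epsilon>" "0 < B"
  obtains \<delta> where "0 < \<delta>"
    "\<And>(v :: 'a \<Rightarrow> real) x y. v \<in> borel_measurable borel \<Longrightarrow> (\<And>y. \<bar>v y\<bar> \<le> B) \<Longrightarrow>
      dist x y < \<delta> \<Longrightarrow> \<bar>kernel_average k v x - kernel_average k v y\<bar> \<le> \<epsilon>"
proof -
  obtain \<delta> where "0 < \<delta>" and \<delta>: "\<And>h. norm h < \<delta> \<Longrightarrow> (LINT z|lborel. \<bar>k (z + h) - k z\<bar>) \<le> \<epsilon> / B"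
    using L1_translation_continuous[OF k_cont k_integrable, of "\<epsilon> / B"] assms by auto
  show thesis
  proof (rule that[OF \<open>0 < \<delta>\<close>])
    fix v :: "'a \<Rightarrow> real" and x y :: 'a
    assume v: "v \<in> borel_measurable borel" "\<And>y. \<bar>v y\<bar> \<le> B" and "dist x y < \<delta>"
    then have "B * (LINT z|lborel. \<bar>k (z + (x - y)) - k z\<bar>) \<le> B * (\<epsilon> / B)"
      using \<delta> \<open>0 < B\<close> by (intro mult_left_mono) (auto simp: dist_norm)
    then show "\<bar>kernel_average k v x - kernel_average k v y\<bar> \<le> \<epsilon>"
      using kernel_average_shift_diff_le[OF v, of x y] \<open>0 < B\<close> by simp
  qed
qed

end

lemma kernel_hypD:
  assumes "kernel_hyp k"
  shows "continuous_on UNIV k" "integrable lborel k" "\<And>x. 0 \<le> k x" "integral\<^sup>L lborel k = 1"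
proof -
  obtain g :: "'a \<Rightarrow> 'a" where "\<And>x. (k has_derivative (\<lambda>h. g x \<bullet> h)) (at x)"
    using assms unfolding kernel_hyp_def by blast
  then show "continuous_on UNIV k"
    by (intro continuous_at_imp_continuous_on ballI has_derivative_continuous)
  show "integrable lborel k" "\<And>x. 0 \<le> k x" "integral\<^sup>L lborel k = 1"
    using assms unfolding kernel_hyp_def by blast+
qed

lemma MVT_between:
  fixes \<phi> \<phi>' :: "real \<Rightarrow> real"
  assumes "\<And>s. (\<phi> has_real_derivative \<phi>' s) (at s)"
  obtains z where "z \<in> {min a b..max a b}" "\<phi> b - \<phi> a = (b - a) * \<phi>' z"
proof (cases a b rule: linorder_cases)
  case less
  then obtain z where "a < z" "z < b" "\<phi> b - \<phi> a = (b - a) * \<phi>' z"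
    using MVT2[of a b \<phi> \<phi>'] assms by blast
  with that[of z] less show thesis
    by auto
next
  case equal
  with that show thesis
    by auto
next
  case greater
  then obtain z where "b < z" "z < a" "\<phi> a - \<phi> b = (a - b) * \<phi>' z"
    using MVT2[of b a \<phi> \<phi>'] assms by blast
  with that[of z] greater show thesis
    by (auto simp: algebra_simps)
qed

lemma bounded_DERIV_neg_above_imp_le:
  fixes w w' :: "real \<Rightarrow> real"
  assumes deriv: "\<And>t. (w has_real_derivative w' t) (at t)"
    and bounded: "\<And>t. \<bar>w t\<bar> \<le> B" and "0 < \<beta>"
    and decreasing: "\<And>t. m < w t \<Longrightarrow> w' t \<le> - \<beta>"
  shows "w t \<le> m"
  (* If w t > m, a maximum of w on [a, t] can only sit at a, so w stays above m on (-inf, t]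
     and grows at rate beta backwards in time, contradicting boundedness. *)
proof (rule ccontr)
  assume "\<not> w t \<le> m"
  then have "m < w t"
    by simp
  have cont: "continuous_on UNIV w"
    using deriv by (intro continuous_at_imp_continuous_on) (auto intro: DERIV_isCont)
  have past_above: "w t \<le> w a" if "a \<le> t" for a
  proof -
    obtain p where p: "p \<in> {a..t}" "\<And>s. s \<in> {a..t} \<Longrightarrow> w s \<le> w p"
      using continuous_attains_sup[of "{a..t}" w] \<open>a \<le> t\<close> continuous_on_subset[OF cont] by auto
    have "p = a"
    proof (rule ccontr)
      assume "p \<noteq> a"
      with p have "a < p"
        by auto
      have "w' p < 0"
        using decreasing[of p] p(2)[of t] \<open>m < w t\<close> \<open>a \<le> t\<close> \<open>0 < \<beta>\<close> by auto
      then obtain d where "0 < d" and d: "\<And>h. 0 < h \<Longrightarrow> h < d \<Longrightarrow> w p < w (p - h)"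
        using DERIV_neg_dec_left[OF deriv[of p]] by blast
      define h where "h = min (d / 2) (p - a)"
      have "0 < h" "h < d" "p - h \<in> {a..t}"
        using \<open>0 < d\<close> \<open>a < p\<close> p(1) by (auto simp: h_def)
      then show False
        using d[of h] p(2)[of "p - h"] by auto
    qed
    with p show ?thesis
      by auto
  qed
  define a where "a = t - (2 * B + 1) / \<beta>"
  have "0 \<le> B"
    using bounded[of 0] by simp
  then have "a \<le> t"
    using \<open>0 < \<beta>\<close> by (simp add: a_def)
  have "w t + \<beta> * t \<le> w a + \<beta> * a"
  proof (rule DERIV_nonpos_imp_nonincreasing[OF \<open>a \<le> t\<close>, of "\<lambda>s. w s + \<beta> * s"])
    fix s
    assume "a \<le> s" "s \<le> t"
    then have "w' s + \<beta> \<le> 0"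
      using decreasing[of s] past_above[of s] \<open>m < w t\<close> by force
    moreover have "((\<lambda>s. w s + \<beta> * s) has_real_derivative w' s + \<beta>) (at s)"
      by (auto intro!: derivative_eq_intros deriv)
    ultimately show "\<exists>y. ((\<lambda>s. w s + \<beta> * s) has_real_derivative y) (at s) \<and> y \<le> 0"
      by blast
  qed
  moreover have "\<beta> * (t - a) = 2 * B + 1"
    using \<open>0 < \<beta>\<close> by (simp add: a_def)
  ultimately show False
    using bounded[of t] bounded[of a] by (simp add: algebra_simps abs_le_iff)
qed

lemma uniform_negative_bound_of_SUP:
  fixes g :: "'i \<Rightarrow> real \<Rightarrow> real"
  assumes "compact V"
    and bdd: "\<And>v. v \<in> V \<Longrightarrow> bdd_above ((\<lambda>i. g i v) ` I)"
    and neg: "\<And>v. v \<in> V \<Longrightarrow> (SUP i\<in>I. g i v) < 0"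
    and equicont: "\<And>e. 0 < e \<Longrightarrow> \<exists>d>0. \<forall>i\<in>I. \<forall>v\<in>V. \<forall>w\<in>V. dist v w < d \<longrightarrow> \<bar>g i v - g i w\<bar> \<le> e"
  obtains \<alpha> where "0 < \<alpha>" "\<And>i v. i \<in> I \<Longrightarrow> v \<in> V \<Longrightarrow> g i v \<le> - \<alpha>"
proof (cases "I = {} \<or> V = {}")
  case True
  with that[of 1] show thesis
    by auto
next
  case False
  define G where "G v = (SUP i\<in>I. g i v)" for v
  have le_G: "g i v \<le> G v" if "i \<in> I" "v \<in> V" for i v
    unfolding G_def using cSUP_upper[OF that(1) bdd[OF that(2)]] .
  have G_le: "G v \<le> G w + e"
    if "w \<in> V" and le: "\<And>i. i \<in> I \<Longrightarrow> g i v \<le> g i w + e" for v w e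
    unfolding G_def
  proof (rule cSUP_least)
    show "I \<noteq> {}"
      using False by simp
    show "g i v \<le> (SUP i\<in>I. g i w) + e" if "i \<in> I" for i
      using le[OF \<open>i \<in> I\<close>] le_G[OF \<open>i \<in> I\<close> \<open>w \<in> V\<close>] by (simp add: G_def)
  qed
  have "continuous_on V G"
    unfolding continuous_on_iff
  proof (intro ballI allI impI)
    fix v and e :: real
    assume "v \<in> V" "0 < e"
    then obtain d where "0 < d" and d: "\<forall>i\<in>I. \<forall>v\<in>V. \<forall>w\<in>V. dist v w < d \<longrightarrow> \<bar>g i v - g i w\<bar> \<le> e / 2"
      using equicont[of "e / 2"] by auto
    have "\<bar>G w - G v\<bar> \<le> e / 2" if "w \<in> V" "dist w v < d" for w
    proof -
      have close: "g i w \<le> g i v + e / 2 \<and> g i v \<le> g i w + e / 2" if "i \<in> I" for i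
        using d[rule_format, OF \<open>i \<in> I\<close> \<open>w \<in> V\<close> \<open>v \<in> V\<close> \<open>dist w v < d\<close>] by linarith
      have "G w \<le> G v + e / 2"
        by (rule G_le[OF \<open>v \<in> V\<close>]) (use close in blast)
      moreover have "G v \<le> G w + e / 2"
        by (rule G_le[OF \<open>w \<in> V\<close>]) (use close in blast)
      ultimately show ?thesis
        by linarith
    qed
    then show "\<exists>d>0. \<forall>w\<in>V. dist w v < d \<longrightarrow> dist (G w) (G v) < e"
      using \<open>0 < d\<close> \<open>0 < e\<close> by (intro exI[of _ d]) (force simp: dist_real_def)
  qed
  then obtain v0 where "v0 \<in> V" "\<And>v. v \<in> V \<Longrightarrow> G v \<le> G v0"
    using continuous_attains_sup[OF \<open>compact V\<close>] False by blast
  with that[of "- G v0"] neg[of v0] le_G show thesis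
    by (force simp: G_def)
qed

lemma diff_le_of_ln_diff_le:
  fixes v w C m :: real
  assumes "0 < v" "v \<le> w" "w \<le> C" "ln w - ln v \<le> m"
  shows "w - v \<le> C * m"
proof -
  have "ln (v / w) \<le> v / w - 1"
    using assms by (intro ln_le_minus_one) auto
  then have "w - v \<le> w * (ln w - ln v)"
    using assms by (simp add: ln_div field_simps)
  also have "\<dots> \<le> C * m"
    using assms by (intro mult_mono) auto
  finally show ?thesis .
qed

lemma uniformly_continuous_on_subset:
  fixes f :: "'a::metric_space \<Rightarrow> 'b::metric_space"
  shows "uniformly_continuous_on T f \<Longrightarrow> S \<subseteq> T \<Longrightarrow> uniformly_continuous_on S f"
  unfolding uniformly_continuous_on_def by (meson subsetD)

lemma uniformly_continuous_on_fst:
  "uniformly_continuous_on (S :: ('a::metric_space \<times> 'b::metric_space) set) fst"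
  unfolding uniformly_continuous_on_def
proof (intro allI impI)
  fix e :: real
  assume "0 < e"
  then show "\<exists>d>0. \<forall>x\<in>S. \<forall>x'\<in>S. dist x' x < d \<longrightarrow> dist (fst x') (fst x) < e"
    by (intro exI[of _ e]) (auto intro: le_less_trans[OF dist_fst_le])
qed

lemma uniformly_continuous_on_snd:
  "uniformly_continuous_on (S :: ('a::metric_space \<times> 'b::metric_space) set) snd"
  unfolding uniformly_continuous_on_def
proof (intro allI impI)
  fix e :: real
  assume "0 < e"
  then show "\<exists>d>0. \<forall>x\<in>S. \<forall>x'\<in>S. dist x' x < d \<longrightarrow> dist (snd x') (snd x) < e"
    by (intro exI[of _ e]) (auto intro: le_less_trans[OF dist_snd_le])
qed

lemma uniformly_continuous_on_Pair:
  fixes f :: "'a::metric_space \<Rightarrow> 'b::metric_space" and g :: "'a \<Rightarrow> 'c::metric_space"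
  assumes "uniformly_continuous_on S f" "uniformly_continuous_on S g"
  shows "uniformly_continuous_on S (\<lambda>x. (f x, g x))"
  unfolding uniformly_continuous_on_sequentially
proof (intro allI impI)
  fix X Y :: "nat \<Rightarrow> 'a"
  assume XY: "(\<forall>n. X n \<in> S) \<and> (\<forall>n. Y n \<in> S) \<and> (\<lambda>n. dist (X n) (Y n)) \<longlonglongrightarrow> 0"
  have "(\<lambda>n. dist (f (X n)) (f (Y n))) \<longlonglongrightarrow> 0" "(\<lambda>n. dist (g (X n)) (g (Y n))) \<longlonglongrightarrow> 0"
    using assms[unfolded uniformly_continuous_on_sequentially, rule_format, OF XY] by auto
  then have "(\<lambda>n. dist (f (X n)) (f (Y n)) + dist (g (X n)) (g (Y n))) \<longlonglongrightarrow> 0"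
    by (rule tendsto_add_zero)
  moreover have "dist (f (X n), g (X n)) (f (Y n), g (Y n)) \<le> dist (f (X n)) (f (Y n)) + dist (g (X n)) (g (Y n))" for n
    unfolding dist_Pair_Pair by (intro sqrt_sum_squares_le_sum zero_le_dist)
  then have "\<forall>n. norm (dist (f (X n), g (X n)) (f (Y n), g (Y n)))
      \<le> dist (f (X n)) (f (Y n)) + dist (g (X n)) (g (Y n))"
    by simp
  ultimately show "(\<lambda>n. dist (f (X n), g (X n)) (f (Y n), g (Y n))) \<longlonglongrightarrow> 0"
    by (rule Lim_null_comparison[OF always_eventually, rotated])
qed

lemma uniformly_continuous_on_mult_bounded:
  fixes f g :: "'a::metric_space \<Rightarrow> 'b::real_normed_algebra"
  assumes "uniformly_continuous_on S f" "uniformly_continuous_on S g"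
    and "bounded (f ` S)" "bounded (g ` S)"
  shows "uniformly_continuous_on S (\<lambda>x. f x * g x)"
  unfolding uniformly_continuous_on_sequentially
proof (intro allI impI)
  obtain Bf Bg where Bf: "\<And>x. x \<in> S \<Longrightarrow> norm (f x) \<le> Bf" and Bg: "\<And>x. x \<in> S \<Longrightarrow> norm (g x) \<le> Bg"
    using assms(3,4) unfolding bounded_iff by auto
  fix X Y :: "nat \<Rightarrow> 'a"
  assume XY: "(\<forall>n. X n \<in> S) \<and> (\<forall>n. Y n \<in> S) \<and> (\<lambda>n. dist (X n) (Y n)) \<longlonglongrightarrow> 0"
  have "(\<lambda>n. dist (f (X n)) (f (Y n))) \<longlonglongrightarrow> 0" "(\<lambda>n. dist (g (X n)) (g (Y n))) \<longlonglongrightarrow> 0"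
    using assms(1,2)[unfolded uniformly_continuous_on_sequentially, rule_format, OF XY] by auto
  then have lim: "(\<lambda>n. Bf * dist (g (X n)) (g (Y n)) + Bg * dist (f (X n)) (f (Y n))) \<longlonglongrightarrow> 0"
    by (intro tendsto_add_zero tendsto_mult_right_zero)
  have bound: "norm (dist (f (X n) * g (X n)) (f (Y n) * g (Y n)))
      \<le> Bf * dist (g (X n)) (g (Y n)) + Bg * dist (f (X n)) (f (Y n))" for n
  proof -
    have "f (X n) * g (X n) - f (Y n) * g (Y n) = f (X n) * (g (X n) - g (Y n)) + (f (X n) - f (Y n)) * g (Y n)"
      by (simp add: algebra_simps)
    then have "norm (dist (f (X n) * g (X n)) (f (Y n) * g (Y n)))
        \<le> norm (f (X n) * (g (X n) - g (Y n))) + norm ((f (X n) - f (Y n)) * g (Y n))"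
      unfolding dist_norm real_norm_def abs_norm_cancel by (metis norm_triangle_ineq)
    also have "\<dots> \<le> norm (f (X n)) * dist (g (X n)) (g (Y n)) + dist (f (X n)) (f (Y n)) * norm (g (Y n))"
      unfolding dist_norm by (intro add_mono norm_mult_ineq)
    also have "\<dots> \<le> Bf * dist (g (X n)) (g (Y n)) + Bg * dist (f (X n)) (f (Y n))"
    proof (rule add_mono)
      show "norm (f (X n)) * dist (g (X n)) (g (Y n)) \<le> Bf * dist (g (X n)) (g (Y n))"
        using XY by (intro mult_right_mono Bf) auto
      have "norm (g (Y n)) * dist (f (X n)) (f (Y n)) \<le> Bg * dist (f (X n)) (f (Y n))"
        using XY by (intro mult_right_mono Bg) auto
      then show "dist (f (X n)) (f (Y n)) * norm (g (Y n)) \<le> Bg * dist (f (X n)) (f (Y n))"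
        by (simp only: mult.commute)
    qed
    finally show ?thesis .
  qed
  then have "\<forall>n. norm (dist (f (X n) * g (X n)) (f (Y n) * g (Y n)))
      \<le> Bf * dist (g (X n)) (g (Y n)) + Bg * dist (f (X n)) (f (Y n))"
    by blast
  with lim show "(\<lambda>n. dist (f (X n) * g (X n)) (f (Y n) * g (Y n))) \<longlonglongrightarrow> 0"
    by (rule Lim_null_comparison[OF always_eventually, rotated])
qed

lemma uniformly_continuous_on_slice:
  fixes \<phi> :: "'a::metric_space \<times> 'b::metric_space \<Rightarrow> 'c::metric_space"
  assumes "uniformly_continuous_on (A \<times> B) \<phi>" "t \<in> A"
  shows "uniformly_continuous_on B (\<lambda>x. \<phi> (t, x))"
  unfolding uniformly_continuous_on_def
proof (intro allI impI)
  fix e :: real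
  assume "0 < e"
  then obtain d where "0 < d" and d: "\<forall>s\<in>A. \<forall>t\<in>A. \<forall>x\<in>B. \<forall>y\<in>B. dist s t < d \<longrightarrow> dist x y < d \<longrightarrow> dist (\<phi> (s, x)) (\<phi> (t, y)) < e"
    using assms(1) unfolding uniformly_continuous_on_prod_metric by blast
  then show "\<exists>d>0. \<forall>x\<in>B. \<forall>y\<in>B. dist y x < d \<longrightarrow> dist (\<phi> (t, y)) (\<phi> (t, x)) < e"
    using \<open>0 < d\<close> d[rule_format, OF \<open>t \<in> A\<close> \<open>t \<in> A\<close>] by (intro exI[of _ d]) (simp add: dist_commute)
qed

lemma uniformly_continuous_on_TimesI:
  fixes \<phi> :: "'a::metric_space \<times> 'b::metric_space \<Rightarrow> 'c::metric_space"
  assumes first: "\<And>e. 0 < e \<Longrightarrow> \<exists>d>0. \<forall>s\<in>A. \<forall>t\<in>A. \<forall>x\<in>B. dist s t < d \<longrightarrow> dist (\<phi> (s, x)) (\<phi> (t, x)) \<le> e"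
    and second: "\<And>e. 0 < e \<Longrightarrow> \<exists>d>0. \<forall>t\<in>A. \<forall>x\<in>B. \<forall>y\<in>B. dist x y < d \<longrightarrow> dist (\<phi> (t, x)) (\<phi> (t, y)) \<le> e"
  shows "uniformly_continuous_on (A \<times> B) \<phi>"
  unfolding uniformly_continuous_on_prod_metric
proof (intro allI impI)
  fix e :: real
  assume "0 < e"
  obtain d1 where "0 < d1" and d1: "\<forall>s\<in>A. \<forall>t\<in>A. \<forall>x\<in>B. dist s t < d1 \<longrightarrow> dist (\<phi> (s, x)) (\<phi> (t, x)) \<le> e / 3"
    using first[of "e / 3"] \<open>0 < e\<close> by auto
  obtain d2 where "0 < d2" and d2: "\<forall>t\<in>A. \<forall>x\<in>B. \<forall>y\<in>B. dist x y < d2 \<longrightarrow> dist (\<phi> (t, x)) (\<phi> (t, y)) \<le> e / 3"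
    using second[of "e / 3"] \<open>0 < e\<close> by auto
  show "\<exists>d>0. \<forall>s\<in>A. \<forall>t\<in>A. \<forall>x\<in>B. \<forall>y\<in>B. dist s t < d \<longrightarrow> dist x y < d \<longrightarrow> dist (\<phi> (s, x)) (\<phi> (t, y)) < e"
  proof (intro exI[of _ "min d1 d2"] conjI ballI impI)
    show "0 < min d1 d2"
      using \<open>0 < d1\<close> \<open>0 < d2\<close> by simp
    fix s t x y
    assume "s \<in> A" "t \<in> A" "x \<in> B" "y \<in> B" "dist s t < min d1 d2" "dist x y < min d1 d2"
    then have "dist (\<phi> (s, x)) (\<phi> (t, x)) \<le> e / 3" "dist (\<phi> (t, x)) (\<phi> (t, y)) \<le> e / 3"
      using d1 d2 by simp_all
    then show "dist (\<phi> (s, x)) (\<phi> (t, y)) < e"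
      using dist_triangle[of "\<phi> (s, x)" "\<phi> (t, y)" "\<phi> (t, x)"] \<open>0 < e\<close> by linarith
  qed
qed

(* K stands for the dispersal term int_D kappa(y - x) u(t,y) dy; only these properties of it
   are used. *)
locale bounded_positive_solution =
  fixes S :: "'a::metric_space set"
    and u K :: "real \<Rightarrow> 'a \<Rightarrow> real"
    and f :: "real \<Rightarrow> 'a \<Rightarrow> real \<Rightarrow> real"
    and c C \<alpha> :: real
  assumes S_nonempty: "S \<noteq> {}"
    and c_pos: "0 < c"
    and u_range: "\<And>t x. x \<in> S \<Longrightarrow> u t x \<in> {c..C}"
    and u_deriv: "\<And>t x. x \<in> S \<Longrightarrow>
      ((\<lambda>s. u s x) has_real_derivative K t x + u t x * f t x (u t x)) (at t)"
    and K_range: "\<And>t x. x \<in> S \<Longrightarrow> K t x \<in> {0..C}"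
    and K_equicontinuous: "\<And>\<epsilon>. 0 < \<epsilon> \<Longrightarrow>
      \<exists>\<delta>>0. \<forall>t. \<forall>x\<in>S. \<forall>y\<in>S. dist x y < \<delta> \<longrightarrow> \<bar>K t x - K t y\<bar> \<le> \<epsilon>"
    and K_diff_le: "\<And>s t x B. x \<in> S \<Longrightarrow> 0 \<le> B \<Longrightarrow> (\<And>y. y \<in> S \<Longrightarrow> \<bar>u s y - u t y\<bar> \<le> B) \<Longrightarrow>
      \<bar>K s x - K t x\<bar> \<le> B"
    and f_uniformly_continuous: "uniformly_continuous_on (UNIV \<times> S \<times> {c..C}) (\<lambda>(t, x, v). f t x v)"
    and f_bounded: "bounded ((\<lambda>(t, x, v). f t x v) ` (UNIV \<times> S \<times> {c..C}))"
    and \<alpha>_pos: "0 < \<alpha>"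
    and f_decreasing: "\<And>t x v w. x \<in> S \<Longrightarrow> c \<le> v \<Longrightarrow> v \<le> w \<Longrightarrow> w \<le> C \<Longrightarrow>
      f t x w - f t x v \<le> - \<alpha> * (w - v)"
begin

definition rhs :: "real \<Rightarrow> 'a \<Rightarrow> real" where
  "rhs t x = K t x + u t x * f t x (u t x)"

lemma rhs_deriv: "x \<in> S \<Longrightarrow> ((\<lambda>s. u s x) has_real_derivative rhs t x) (at t)"
  unfolding rhs_def by (rule u_deriv)

lemma u_pos: "x \<in> S \<Longrightarrow> 0 < u t x"
  using u_range[of x t] c_pos by auto

lemma C_pos: "0 < C"
  using S_nonempty u_range c_pos by fastforce

lemma f_bounded_by: "\<exists>F>0. \<forall>t. \<forall>x\<in>S. \<forall>v\<in>{c..C}. \<bar>f t x v\<bar> \<le> F"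
  using f_bounded unfolding bounded_pos by force

lemma rhs_bounded: "\<exists>L\<ge>0. \<forall>t. \<forall>x\<in>S. \<bar>rhs t x\<bar> \<le> L"
proof -
  obtain F where "0 < F" and F: "\<And>t x v. x \<in> S \<Longrightarrow> v \<in> {c..C} \<Longrightarrow> \<bar>f t x v\<bar> \<le> F"
    using f_bounded_by by auto
  have "\<bar>rhs t x\<bar> \<le> C + C * F" if "x \<in> S" for t x
  proof -
    have "\<bar>u t x * f t x (u t x)\<bar> \<le> C * F"
      unfolding abs_mult using u_range[OF that, of t] F[OF that u_range[OF that, of t], of t] c_pos
      by (intro mult_mono) auto
    then show ?thesis
      using K_range[OF that, of t] by (auto simp: rhs_def abs_le_iff)
  qed
  with C_pos \<open>0 < F\<close> show ?thesis
    by (intro exI[of _ "C + C * F"]) auto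
qed

lemma u_lipschitz_in_time:
  assumes L: "\<And>t x. x \<in> S \<Longrightarrow> \<bar>rhs t x\<bar> \<le> L" and "x \<in> S"
  shows "\<bar>u s x - u t x\<bar> \<le> L * \<bar>s - t\<bar>"
proof -
  obtain z where "u s x - u t x = (s - t) * rhs z x"
    using MVT_between[of "\<lambda>s. u s x" "\<lambda>s. rhs s x" t s] rhs_deriv[OF \<open>x \<in> S\<close>] by blast
  then have "\<bar>u s x - u t x\<bar> = \<bar>s - t\<bar> * \<bar>rhs z x\<bar>"
    by (simp add: abs_mult)
  also have "\<dots> \<le> \<bar>s - t\<bar> * L"
    using L[OF \<open>x \<in> S\<close>] by (intro mult_left_mono) auto
  finally show ?thesis
    by (simp add: mult.commute)
qed

lemma f_equicontinuous_in_space: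
  assumes "0 < \<epsilon>"
  obtains \<delta> where "0 < \<delta>"
    "\<And>t x y v. x \<in> S \<Longrightarrow> y \<in> S \<Longrightarrow> v \<in> {c..C} \<Longrightarrow> dist x y < \<delta> \<Longrightarrow> \<bar>f t x v - f t y v\<bar> \<le> \<epsilon>"
proof -
  obtain \<delta> where "0 < \<delta>" and \<delta>: "\<forall>p\<in>UNIV \<times> S \<times> {c..C}. \<forall>p'\<in>UNIV \<times> S \<times> {c..C}.
      dist p' p < \<delta> \<longrightarrow> dist ((\<lambda>(t, x, v). f t x v) p') ((\<lambda>(t, x, v). f t x v) p) < \<epsilon>"
    using f_uniformly_continuous assms unfolding uniformly_continuous_on_def by metis
  show thesis
  proof (rule that[OF \<open>0 < \<delta>\<close>])
    fix t v :: real and x y :: 'a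
    assume "x \<in> S" "y \<in> S" "v \<in> {c..C}" "dist x y < \<delta>"
    moreover have "dist (t, x, v) (t, y, v) = dist x y"
      by (simp add: dist_Pair_Pair)
    ultimately show "\<bar>f t x v - f t y v\<bar> \<le> \<epsilon>"
      using \<delta>[rule_format, of "(t, y, v)" "(t, x, v)"] by (simp add: dist_real_def)
  qed
qed

lemma log_derivative_gap:
  assumes x: "x \<in> S" and y: "y \<in> S" and "0 \<le> m"
    and K_close: "\<bar>K t x - K t y\<bar> \<le> \<eta>\<^sub>1"
    and f_close: "\<bar>f t x (u t y) - f t y (u t y)\<bar> \<le> \<eta>\<^sub>2"
    and gap: "m < ln (u t x) - ln (u t y)"
  shows "rhs t x / u t x - rhs t y / u t y \<le> \<eta>\<^sub>1 / c + \<eta>\<^sub>2 - \<alpha> * c * m"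
proof -
  define v w where "v = u t y" and "w = u t x"
  have "0 < v" "c \<le> v" "w \<le> C" "0 < w"
    using u_range[OF x, of t] u_range[OF y, of t] c_pos by (auto simp: v_def w_def)
  have "ln v < ln w"
    using gap \<open>0 \<le> m\<close> by (simp add: v_def w_def)
  then have "v < w"
    using \<open>0 < v\<close> \<open>0 < w\<close> by simp
  have split: "rhs t x / w - rhs t y / v
      = (K t x - K t y) / w + K t y * (1 / w - 1 / v) + (f t x w - f t x v) + (f t x v - f t y v)"
    using \<open>0 < v\<close> \<open>0 < w\<close> by (simp add: rhs_def v_def w_def field_simps)
  have "(K t x - K t y) / w \<le> \<eta>\<^sub>1 / w"
    using K_close \<open>0 < w\<close> by (simp add: divide_right_mono)
  also have "\<dots> \<le> \<eta>\<^sub>1 / c"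
    using K_close \<open>c \<le> v\<close> \<open>v < w\<close> c_pos by (intro divide_left_mono) auto
  finally have K_term: "(K t x - K t y) / w \<le> \<eta>\<^sub>1 / c" .
  have "K t y * (1 / w - 1 / v) \<le> 0"
    using K_range[OF y, of t] \<open>0 < v\<close> \<open>v < w\<close> by (intro mult_nonneg_nonpos) (auto simp: field_simps)
  moreover have "c * m \<le> w - v"
  proof -
    have "ln (w / v) \<le> w / v - 1"
      using \<open>0 < v\<close> \<open>0 < w\<close> by (intro ln_le_minus_one) auto
    then have "ln w - ln v \<le> (w - v) / v"
      using \<open>0 < v\<close> \<open>0 < w\<close> by (simp add: ln_div diff_divide_distrib)
    then have "m \<le> (w - v) / v"
      using gap by (simp add: v_def w_def)
    then have "v * m \<le> w - v"
      using \<open>0 < v\<close> by (simp add: field_simps)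
    moreover have "c * m \<le> v * m"
      using \<open>c \<le> v\<close> \<open>0 \<le> m\<close> by (rule mult_right_mono)
    ultimately show ?thesis
      by linarith
  qed
  then have "f t x w - f t x v \<le> - \<alpha> * c * m"
    using f_decreasing[OF x \<open>c \<le> v\<close> less_imp_le[OF \<open>v < w\<close>] \<open>w \<le> C\<close>, of t] \<alpha>_pos
      mult_left_mono[of "c * m" "w - v" \<alpha>] by (simp add: algebra_simps)
  ultimately show ?thesis
    using split K_term f_close by (simp add: v_def w_def)
qed

lemma log_ratio_small:
  assumes "0 < m"
  obtains \<delta> where "0 < \<delta>"
    "\<And>t x y. x \<in> S \<Longrightarrow> y \<in> S \<Longrightarrow> dist x y < \<delta> \<Longrightarrow> ln (u t x) - ln (u t y) \<le> m"
proof -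
  define q where "q = \<alpha> * c * m / 2"
  have "0 < q"
    using \<alpha>_pos c_pos assms by (simp add: q_def)
  obtain \<delta>\<^sub>1 where "0 < \<delta>\<^sub>1"
    and \<delta>\<^sub>1: "\<forall>t. \<forall>x\<in>S. \<forall>y\<in>S. dist x y < \<delta>\<^sub>1 \<longrightarrow> \<bar>K t x - K t y\<bar> \<le> c * q / 2"
    using K_equicontinuous[of "c * q / 2"] \<open>0 < q\<close> c_pos by auto
  obtain \<delta>\<^sub>2 where "0 < \<delta>\<^sub>2" and \<delta>\<^sub>2: "\<And>t x y v. x \<in> S \<Longrightarrow> y \<in> S \<Longrightarrow> v \<in> {c..C} \<Longrightarrow>
      dist x y < \<delta>\<^sub>2 \<Longrightarrow> \<bar>f t x v - f t y v\<bar> \<le> q / 2"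
    using f_equicontinuous_in_space[of "q / 2"] \<open>0 < q\<close> by auto
  have ln_deriv: "((\<lambda>s. ln (u s z)) has_real_derivative rhs t z / u t z) (at t)" if "z \<in> S" for t z
    using DERIV_chain2[OF DERIV_ln_divide[OF u_pos[OF that]] rhs_deriv[OF that]] by simp
  have ln_bound: "\<bar>ln (u t z)\<bar> \<le> \<bar>ln c\<bar> + \<bar>ln C\<bar>" if "z \<in> S" for t z
  proof -
    have "ln c \<le> ln (u t z)" "ln (u t z) \<le> ln C"
      using u_range[OF that, of t] c_pos by auto
    then show ?thesis
      by linarith
  qed
  show thesis
  proof (rule that[of "min \<delta>\<^sub>1 \<delta>\<^sub>2"])
    show "0 < min \<delta>\<^sub>1 \<delta>\<^sub>2"
      using \<open>0 < \<delta>\<^sub>1\<close> \<open>0 < \<delta>\<^sub>2\<close> by simp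
    fix t x y
    assume x: "x \<in> S" and y: "y \<in> S" and close: "dist x y < min \<delta>\<^sub>1 \<delta>\<^sub>2"
    show "ln (u t x) - ln (u t y) \<le> m"
    proof (rule bounded_DERIV_neg_above_imp_le[where w = "\<lambda>s. ln (u s x) - ln (u s y)"
          and w' = "\<lambda>s. rhs s x / u s x - rhs s y / u s y" and B = "2 * (\<bar>ln c\<bar> + \<bar>ln C\<bar>)" and \<beta> = q])
      show "((\<lambda>s. ln (u s x) - ln (u s y)) has_real_derivative rhs s x / u s x - rhs s y / u s y) (at s)" for s
        using ln_deriv[OF x] ln_deriv[OF y] by (rule DERIV_diff)
      show "\<bar>ln (u s x) - ln (u s y)\<bar> \<le> 2 * (\<bar>ln c\<bar> + \<bar>ln C\<bar>)" for s
        using ln_bound[OF x, of s] ln_bound[OF y, of s] abs_triangle_ineq4[of "ln (u s x)" "ln (u s y)"]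
        by simp
      show "0 < q"
        by fact
      show "rhs s x / u s x - rhs s y / u s y \<le> - q" if "m < ln (u s x) - ln (u s y)" for s
      proof -
        have "rhs s x / u s x - rhs s y / u s y \<le> (c * q / 2) / c + q / 2 - \<alpha> * c * m"
        proof (rule log_derivative_gap[OF x y _ _ _ that])
          show "0 \<le> m"
            using assms by simp
          show "\<bar>K s x - K s y\<bar> \<le> c * q / 2"
            using \<delta>\<^sub>1 x y close by simp
          show "\<bar>f s x (u s y) - f s y (u s y)\<bar> \<le> q / 2"
            using \<delta>\<^sub>2[OF x y u_range[OF y]] close by simp
        qed
        also have "\<dots> = - q"
          using c_pos by (simp add: q_def field_simps)
        finally show ?thesis .
      qed
    qed
  qed
qed

lemma u_equicontinuous_in_space:
  assumes "0 < \<epsilon>"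
  shows "\<exists>\<delta>>0. \<forall>t. \<forall>x\<in>S. \<forall>y\<in>S. dist x y < \<delta> \<longrightarrow> dist (u t x) (u t y) \<le> \<epsilon>"
proof -
  obtain \<delta> where "0 < \<delta>" and \<delta>: "\<And>t x y. x \<in> S \<Longrightarrow> y \<in> S \<Longrightarrow> dist x y < \<delta> \<Longrightarrow> ln (u t x) - ln (u t y) \<le> \<epsilon> / C"
    using log_ratio_small[of "\<epsilon> / C"] assms C_pos by auto
  have one_sided: "u t x - u t y \<le> \<epsilon>" if "x \<in> S" "y \<in> S" "dist x y < \<delta>" for t x y
  proof (cases "u t y \<le> u t x")
    case True
    then have "u t x - u t y \<le> C * (\<epsilon> / C)"
      using u_pos[OF \<open>y \<in> S\<close>] u_range[OF \<open>x \<in> S\<close>] \<delta>[OF that] by (intro diff_le_of_ln_diff_le) auto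
    with C_pos show ?thesis
      by simp
  next
    case False
    with assms show ?thesis
      by simp
  qed
  have "dist (u t x) (u t y) \<le> \<epsilon>" if "x \<in> S" "y \<in> S" "dist x y < \<delta>" for t x y
  proof -
    have "dist y x < \<delta>"
      using that(3) by (simp add: dist_commute)
    then show ?thesis
      using one_sided[OF that] one_sided[OF that(2,1)] by (simp add: dist_real_def abs_le_iff)
  qed
  with \<open>0 < \<delta>\<close> show ?thesis
    by auto
qed

lemma u_uniformly_continuous: "uniformly_continuous_on (UNIV \<times> S) (\<lambda>(t, x). u t x)"
proof (rule uniformly_continuous_on_TimesI)
  obtain L where "0 \<le> L" and L: "\<And>t x. x \<in> S \<Longrightarrow> \<bar>rhs t x\<bar> \<le> L"
    using rhs_bounded by auto
  fix e :: real
  assume "0 < e"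
  have "dist (u s x) (u t x) \<le> e" if "x \<in> S" "dist s t < e / (L + 1)" for s t x
  proof -
    have "\<bar>u s x - u t x\<bar> \<le> L * \<bar>s - t\<bar>"
      using u_lipschitz_in_time[OF L \<open>x \<in> S\<close>] .
    also have "\<dots> \<le> (L + 1) * (e / (L + 1))"
      using that \<open>0 \<le> L\<close> by (intro mult_mono) (auto simp: dist_real_def)
    finally show ?thesis
      using \<open>0 \<le> L\<close> by (simp add: dist_real_def)
  qed
  then show "\<exists>d>0. \<forall>s\<in>UNIV. \<forall>t\<in>UNIV. \<forall>x\<in>S. dist s t < d \<longrightarrow>
      dist ((\<lambda>(t, x). u t x) (s, x)) ((\<lambda>(t, x). u t x) (t, x)) \<le> e"
    using \<open>0 < e\<close> \<open>0 \<le> L\<close> by (intro exI[of _ "e / (L + 1)"]) auto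
next
  fix e :: real
  assume "0 < e"
  then show "\<exists>d>0. \<forall>t\<in>UNIV. \<forall>x\<in>S. \<forall>y\<in>S. dist x y < d \<longrightarrow>
      dist ((\<lambda>(t, x). u t x) (t, x)) ((\<lambda>(t, x). u t x) (t, y)) \<le> e"
    using u_equicontinuous_in_space by simp
qed

lemma K_uniformly_continuous: "uniformly_continuous_on (UNIV \<times> S) (\<lambda>(t, x). K t x)"
proof (rule uniformly_continuous_on_TimesI)
  obtain L where "0 \<le> L" and L: "\<And>t x. x \<in> S \<Longrightarrow> \<bar>rhs t x\<bar> \<le> L"
    using rhs_bounded by auto
  fix e :: real
  assume "0 < e"
  have "dist (K s x) (K t x) \<le> e" if "x \<in> S" "dist s t < e / (L + 1)" for s t x
  proof -
    have "\<bar>K s x - K t x\<bar> \<le> L * \<bar>s - t\<bar>"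
      using \<open>x \<in> S\<close> \<open>0 \<le> L\<close> by (intro K_diff_le u_lipschitz_in_time[OF L]) auto
    also have "\<dots> \<le> (L + 1) * (e / (L + 1))"
      using that \<open>0 \<le> L\<close> by (intro mult_mono) (auto simp: dist_real_def)
    finally show ?thesis
      using \<open>0 \<le> L\<close> by (simp add: dist_real_def)
  qed
  then show "\<exists>d>0. \<forall>s\<in>UNIV. \<forall>t\<in>UNIV. \<forall>x\<in>S. dist s t < d \<longrightarrow>
      dist ((\<lambda>(t, x). K t x) (s, x)) ((\<lambda>(t, x). K t x) (t, x)) \<le> e"
    using \<open>0 < e\<close> \<open>0 \<le> L\<close> by (intro exI[of _ "e / (L + 1)"]) auto
next
  fix e :: real
  assume "0 < e"
  then show "\<exists>d>0. \<forall>t\<in>UNIV. \<forall>x\<in>S. \<forall>y\<in>S. dist x y < d \<longrightarrow>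
      dist ((\<lambda>(t, x). K t x) (t, x)) ((\<lambda>(t, x). K t x) (t, y)) \<le> e"
    using K_equicontinuous by (simp add: dist_real_def)
qed

lemma reaction_uniformly_continuous:
  "uniformly_continuous_on (UNIV \<times> S \<times> {c..C}) (\<lambda>(t, x, v). v * f t x v)"
proof -
  have "uniformly_continuous_on (UNIV \<times> S \<times> {c..C}) (\<lambda>p. snd (snd p) * (\<lambda>(t, x, v). f t x v) p)"
  proof (rule uniformly_continuous_on_mult_bounded)
    show "uniformly_continuous_on ((UNIV :: real set) \<times> S \<times> {c..C}) (\<lambda>p. snd (snd p))"
      by (rule uniformly_continuous_on_compose[of _ snd snd]) (rule uniformly_continuous_on_snd)+
    show "bounded ((\<lambda>p. snd (snd p)) ` ((UNIV :: real set) \<times> S \<times> {c..C}))"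
      by (rule bounded_subset[of "{c..C}"]) auto
  qed (fact f_uniformly_continuous f_bounded)+
  then show ?thesis
    by (simp add: case_prod_unfold)
qed

lemma rhs_uniformly_continuous: "uniformly_continuous_on (UNIV \<times> S) (\<lambda>(t, x). rhs t x)"
proof -
  define lift where "lift p = (fst p, snd p, u (fst p) (snd p))" for p :: "real \<times> 'a"
  have "uniformly_continuous_on (UNIV \<times> S) lift"
    unfolding lift_def using u_uniformly_continuous
    by (intro uniformly_continuous_on_Pair uniformly_continuous_on_fst uniformly_continuous_on_snd)
      (simp add: case_prod_unfold)
  moreover have "lift ` (UNIV \<times> S) \<subseteq> UNIV \<times> S \<times> {c..C}"
    using u_range by (auto simp: lift_def)
  ultimately have "uniformly_continuous_on (UNIV \<times> S) (\<lambda>p. (\<lambda>(t, x, v). v * f t x v) (lift p))"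
    using uniformly_continuous_on_compose uniformly_continuous_on_subset[OF reaction_uniformly_continuous]
    by blast
  with K_uniformly_continuous
  have "uniformly_continuous_on (UNIV \<times> S) (\<lambda>p. (\<lambda>(t, x). K t x) p + (\<lambda>(t, x, v). v * f t x v) (lift p))"
    by (rule uniformly_continuous_on_add)
  moreover have "(\<lambda>p. (\<lambda>(t, x). K t x) p + (\<lambda>(t, x, v). v * f t x v) (lift p)) = (\<lambda>(t, x). rhs t x)"
    by (auto simp: fun_eq_iff rhs_def lift_def)
  ultimately show ?thesis
    by simp
qed

lemma u_in_X: "in_X S (u t)"
  unfolding in_X_def
proof
  show "bounded (u t ` S)"
    by (rule bounded_subset[of "{c..C}"]) (use u_range in auto)
  show "uniformly_continuous_on S (u t)"
    using uniformly_continuous_on_slice[OF u_uniformly_continuous, of t] by simp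
qed

lemma rhs_in_X: "in_X S (rhs t)"
  unfolding in_X_def
proof
  obtain L where "\<forall>x\<in>S. \<bar>rhs t x\<bar> \<le> L"
    using rhs_bounded by auto
  then show "bounded (rhs t ` S)"
    unfolding bounded_iff by auto
  show "uniformly_continuous_on S (rhs t)"
    using uniformly_continuous_on_slice[OF rhs_uniformly_continuous, of t] by simp
qed

lemma u_has_X_derivative: "has_X_derivative S u (rhs t) t"
  unfolding has_X_derivative_def
proof (intro conjI allI impI rhs_in_X)
  fix \<epsilon> :: real
  assume "0 < \<epsilon>"
  then obtain d where "0 < d" and d: "\<forall>s\<in>UNIV. \<forall>s'\<in>UNIV. \<forall>x\<in>S. \<forall>y\<in>S. dist s s' < d \<longrightarrow> dist x y < d \<longrightarrow>
      dist ((\<lambda>(t, x). rhs t x) (s, x)) ((\<lambda>(t, x). rhs t x) (s', y)) < \<epsilon>"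
    using rhs_uniformly_continuous[unfolded uniformly_continuous_on_prod_metric, rule_format, OF \<open>0 < \<epsilon>\<close>]
    by blast
  have "\<bar>(u (t + h) x - u t x) / h - rhs t x\<bar> \<le> \<epsilon>" if "h \<noteq> 0" "\<bar>h\<bar> < d" "x \<in> S" for h x
  proof -
    obtain z where z: "z \<in> {min t (t + h)..max t (t + h)}" "u (t + h) x - u t x = (t + h - t) * rhs z x"
      using MVT_between[of "\<lambda>s. u s x" "\<lambda>s. rhs s x" t "t + h"] rhs_deriv[OF \<open>x \<in> S\<close>] by blast
    then have "(u (t + h) x - u t x) / h = rhs z x"
      using \<open>h \<noteq> 0\<close> by simp
    moreover have "dist z t < d"
      using z(1) \<open>\<bar>h\<bar> < d\<close> by (auto simp: dist_real_def)
    ultimately show ?thesis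
      using d[rule_format, of z t x x] \<open>x \<in> S\<close> \<open>0 < d\<close> by (simp add: dist_real_def)
  qed
  then show "\<forall>\<^sub>F h in at 0. \<forall>x\<in>S. \<bar>(u (t + h) x - u t x) / h - rhs t x\<bar> \<le> \<epsilon>"
    unfolding eventually_at using \<open>0 < d\<close> by (intro exI[of _ d]) (auto simp: dist_real_def)
qed

end

lemma measurable_indicator_mult_slice:
  fixes u :: "real \<Rightarrow> 'a::euclidean_space \<Rightarrow> real"
  assumes meas: "(\<lambda>p. u (fst p) (snd p)) \<in> borel_measurable (restrict_space borel (UNIV \<times> S))"
    and "closed S" "D \<in> sets borel" "D \<subseteq> S"
  shows "(\<lambda>y. indicator D y * u t y) \<in> borel_measurable borel"
proof -
  have "(\<lambda>y. (t, y)) \<in> restrict_space borel S \<rightarrow>\<^sub>M restrict_space borel (UNIV \<times> S)"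
  proof (rule measurable_restrict_space3)
    show "(\<lambda>y. (t, y)) \<in> borel \<rightarrow>\<^sub>M borel"
      by (intro borel_measurable_continuous_onI continuous_intros)
  qed auto
  from measurable_comp[OF this meas] have "u t \<in> borel_measurable (restrict_space borel S)"
    by (simp add: o_def)
  then have "(\<lambda>y. indicator S y *\<^sub>R u t y) \<in> borel_measurable borel"
    using borel_measurable_restrict_space_iff[of S borel "u t"] \<open>closed S\<close> by auto
  then have "(\<lambda>y. indicator D y * (indicator S y *\<^sub>R u t y)) \<in> borel_measurable borel"
    using \<open>D \<in> sets borel\<close> by measurable
  moreover have "(\<lambda>y. indicator D y * (indicator S y *\<^sub>R u t y)) = (\<lambda>y. indicator D y * u t y)"
    using \<open>D \<subseteq> S\<close> by (auto simp: fun_eq_iff split: split_indicator)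
  ultimately show ?thesis
    by simp
qed

lemma nonlin_hyp_uniformly_decreasing:
  assumes nl: "nonlin_hyp D f fu" and "0 \<le> c"
  obtains \<alpha> where "0 < \<alpha>"
    "\<And>t x v w. x \<in> closure D \<Longrightarrow> c \<le> v \<Longrightarrow> v \<le> w \<Longrightarrow> w \<le> C \<Longrightarrow> f t x w - f t x v \<le> - \<alpha> * (w - v)"
proof -
  have f_deriv: "\<And>t x v. x \<in> closure D \<Longrightarrow> (f t x has_real_derivative fu t x v) (at v)"
    and fu_uc: "uniformly_continuous_on (UNIV \<times> closure D \<times> {c..C}) (\<lambda>(t, x, v). fu t x v)"
    and fu_bdd: "bounded ((\<lambda>(t, x, v). fu t x v) ` (UNIV \<times> closure D \<times> {c..C}))"
    and fu_neg: "\<And>v. 0 \<le> v \<Longrightarrow> (SUP (t, x)\<in>UNIV \<times> closure D. fu t x v) < 0"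
    using nl bounded_closed_interval[of c C] unfolding nonlin_hyp_def by blast+
  obtain B where B: "\<And>t x v. x \<in> closure D \<Longrightarrow> v \<in> {c..C} \<Longrightarrow> \<bar>fu t x v\<bar> \<le> B"
    using fu_bdd unfolding bounded_iff by fastforce
  have bdd: "bdd_above ((\<lambda>p. fu (fst p) (snd p) v) ` (UNIV \<times> closure D))" if "v \<in> {c..C}" for v
    using B[OF _ that] by (intro bdd_aboveI2[where M = B]) (auto simp: abs_le_iff)
  have neg: "(SUP p\<in>UNIV \<times> closure D. fu (fst p) (snd p) v) < 0" if "v \<in> {c..C}" for v
    using fu_neg[of v] that \<open>0 \<le> c\<close> by (simp add: case_prod_unfold)
  have equicont: "\<exists>d>0. \<forall>p\<in>UNIV \<times> closure D. \<forall>v\<in>{c..C}. \<forall>w\<in>{c..C}.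
      dist v w < d \<longrightarrow> \<bar>fu (fst p) (snd p) v - fu (fst p) (snd p) w\<bar> \<le> e" if "0 < e" for e
  proof -
    obtain d where "0 < d" and d: "\<forall>p\<in>UNIV \<times> closure D \<times> {c..C}. \<forall>p'\<in>UNIV \<times> closure D \<times> {c..C}.
        dist p' p < d \<longrightarrow> dist ((\<lambda>(t, x, v). fu t x v) p') ((\<lambda>(t, x, v). fu t x v) p) < e"
      using fu_uc[unfolded uniformly_continuous_on_def, rule_format, OF \<open>0 < e\<close>] by blast
    have "\<bar>fu t x v - fu t x w\<bar> \<le> e"
      if "x \<in> closure D" "v \<in> {c..C}" "w \<in> {c..C}" "dist v w < d" for t x v w
    proof -
      have "dist (t, x, v) (t, x, w) = dist v w"
        by (simp add: dist_Pair_Pair)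
      then show ?thesis
        using d[rule_format, of "(t, x, w)" "(t, x, v)"] that by (simp add: dist_real_def)
    qed
    with \<open>0 < d\<close> show ?thesis
      by (intro exI[of _ d]) auto
  qed
  obtain \<alpha> where "0 < \<alpha>"
    and \<alpha>: "\<And>p v. p \<in> UNIV \<times> closure D \<Longrightarrow> v \<in> {c..C} \<Longrightarrow> fu (fst p) (snd p) v \<le> - \<alpha>"
    using uniform_negative_bound_of_SUP[where g = "\<lambda>p v. fu (fst p) (snd p) v", OF compact_Icc bdd neg equicont]
    by blast
  show thesis
  proof (rule that[OF \<open>0 < \<alpha>\<close>])
    fix t x v w
    assume "x \<in> closure D" "c \<le> v" "v \<le> w" "w \<le> C"
    obtain z where "z \<in> {min v w..max v w}" "f t x w - f t x v = (w - v) * fu t x z"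
      using MVT_between[of "f t x" "fu t x" v w] f_deriv[OF \<open>x \<in> closure D\<close>] by blast
    moreover have "fu t x z \<le> - \<alpha>" if "z \<in> {min v w..max v w}"
      using \<alpha>[of "(t, x)" z] that \<open>x \<in> closure D\<close> \<open>c \<le> v\<close> \<open>v \<le> w\<close> \<open>w \<le> C\<close> by simp
    ultimately show "f t x w - f t x v \<le> - \<alpha> * (w - v)"
      using \<open>v \<le> w\<close> mult_left_mono[of "fu t x z" "- \<alpha>" "w - v"] by (simp add: mult.commute)
  qed
qed

lemma set_kernel_average_bounded_positive_solution:
  fixes k :: "'a::euclidean_space \<Rightarrow> real"
  assumes kernel: "kernel_hyp k"
    and "S \<noteq> {}" "D \<subseteq> S" "0 < c"
    and u_range: "\<And>t x. x \<in> S \<Longrightarrow> u t x \<in> {c..C}"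
    and u_meas: "\<And>t. (\<lambda>y. indicator D y * u t y) \<in> borel_measurable borel"
    and u_deriv: "\<And>t x. x \<in> S \<Longrightarrow> ((\<lambda>s. u s x) has_real_derivative
      (LINT y:D|lborel. k (y - x) * u t y) + u t x * f t x (u t x)) (at t)"
    and "uniformly_continuous_on (UNIV \<times> S \<times> {c..C}) (\<lambda>(t, x, v). f t x v)"
    and "bounded ((\<lambda>(t, x, v). f t x v) ` (UNIV \<times> S \<times> {c..C}))"
    and "0 < \<alpha>"
    and "\<And>t x v w. x \<in> S \<Longrightarrow> c \<le> v \<Longrightarrow> v \<le> w \<Longrightarrow> w \<le> C \<Longrightarrow>
      f t x w - f t x v \<le> - \<alpha> * (w - v)"
  shows "bounded_positive_solution S u (\<lambda>t x. LINT y:D|lborel. k (y - x) * u t y) f c C \<alpha>"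
proof -
  note k = kernel_hypD[OF kernel]
  have k_meas: "k \<in> borel_measurable borel"
    using k(1) by (rule borel_measurable_continuous_onI)
  define U where "U t y = indicator D y * u t y" for t y
  have avg: "(LINT y:D|lborel. k (y - x) * u t y) = kernel_average k (U t) x" for t x
    by (simp add: set_lebesgue_integral_def kernel_average_def U_def mult.left_commute)
  have "0 < C"
    using \<open>S \<noteq> {}\<close> u_range \<open>0 < c\<close> by fastforce
  have U_meas: "U t \<in> borel_measurable borel" for t
    unfolding U_def by (rule u_meas)
  have U_range: "0 \<le> U t y" "\<bar>U t y\<bar> \<le> C" for t y
    using u_range[of y t] \<open>D \<subseteq> S\<close> \<open>0 < c\<close> \<open>0 < C\<close> by (auto simp: U_def split: split_indicator)
  show ?thesis
    unfolding avg
  proof unfold_locales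
    show "kernel_average k (U t) x \<in> {0..C}" for t x
      using kernel_average_nonneg[OF k_meas k(2-4), of "U t" x] U_range
        kernel_average_abs_le[OF k_meas k(2-4) U_meas[of t] U_range(2)[of t], of x] by auto
    show "\<exists>\<delta>>0. \<forall>t. \<forall>x\<in>S. \<forall>y\<in>S. dist x y < \<delta> \<longrightarrow>
        \<bar>kernel_average k (U t) x - kernel_average k (U t) y\<bar> \<le> \<epsilon>"
      if \<epsilon>: "0 < \<epsilon>" for \<epsilon>
    proof -
      obtain \<delta> where "0 < \<delta>" and \<delta>: "\<And>v x y. v \<in> borel_measurable borel \<Longrightarrow> (\<And>y. \<bar>v y\<bar> \<le> C) \<Longrightarrow>
          dist x y < \<delta> \<Longrightarrow> \<bar>kernel_average k v x - kernel_average k v y\<bar> \<le> \<epsilon>"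
        using kernel_average_equicontinuous[OF k_meas k(2-4) k(1) \<epsilon> \<open>0 < C\<close>] by blast
      then show ?thesis
        using U_meas U_range by blast
    qed
    show "\<bar>kernel_average k (U s) x - kernel_average k (U t) x\<bar> \<le> B"
      if "0 \<le> B" and diff: "\<And>y. y \<in> S \<Longrightarrow> \<bar>u s y - u t y\<bar> \<le> B" for s t x B
    proof -
      have "\<bar>U s y - U t y\<bar> \<le> B" for y
        using diff[of y] \<open>0 \<le> B\<close> \<open>D \<subseteq> S\<close> by (auto simp: U_def split: split_indicator)
      moreover have "(\<lambda>y. U s y - U t y) \<in> borel_measurable borel"
        using U_meas by measurable
      ultimately show ?thesis
        using kernel_average_diff[OF k_meas k(2-4) U_meas U_range(2) U_meas U_range(2), of s x t]
          kernel_average_abs_le[OF k_meas k(2-4), of "\<lambda>y. U s y - U t y" B x] by simp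
    qed
    show "((\<lambda>s. u s x) has_real_derivative kernel_average k (U t) x + u t x * f t x (u t x)) (at t)"
      if "x \<in> S" for t x
      using u_deriv[OF that, of t] by (simp add: avg)
  qed (fact assms)+
qed

theorem lemma3p2:
  fixes D :: "'a::euclidean_space set"
    and \<kappa> :: "'a \<Rightarrow> real"
    and f fu :: "real \<Rightarrow> 'a \<Rightarrow> real \<Rightarrow> real"
    and u :: "real \<Rightarrow> 'a \<Rightarrow> real"
  assumes dom: "admissible_domain D"
    and ker: "kernel_hyp \<kappa>"
    and nl: "nonlin_hyp D f fu"
    and meas: "(\<lambda>p. u (fst p) (snd p)) \<in> borel_measurable (restrict_space borel (UNIV \<times> closure D))"
    and pos: "\<exists>c>0. \<forall>t. \<forall>x\<in>closure D. u t x \<ge> c"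
    and bdd: "\<exists>C. \<forall>t. \<forall>x\<in>closure D. u t x \<le> C"
    and eqn: "\<forall>t. \<forall>x\<in>closure D.
        ((\<lambda>s. u s x) has_real_derivative
           ((LINT y:D|lborel. \<kappa> (y - x) * u t y) + u t x * f t x (u t x))) (at t)"
  shows "uniformly_continuous_on (UNIV \<times> closure D) (\<lambda>(t, x). u t x) \<and>
         (\<forall>t. in_X (closure D) (u t) \<and>
              has_X_derivative (closure D) u
                (\<lambda>x. (LINT y:D|lborel. \<kappa> (y - x) * u t y) + u t x * f t x (u t x)) t)"
proof -
  define S where "S = closure D"
  have "S \<noteq> {}" "closed S" "D \<subseteq> S" "D \<in> sets borel"
    using dom unfolding admissible_domain_def S_def by (auto simp: closure_subset)
  obtain c C where "0 < c" and u_range: "\<And>t x. x \<in> S \<Longrightarrow> u t x \<in> {c..C}"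
    using pos bdd unfolding S_def by fastforce
  obtain \<alpha> where "0 < \<alpha>" and f_decreasing: "\<And>t x v w. x \<in> S \<Longrightarrow> c \<le> v \<Longrightarrow> v \<le> w \<Longrightarrow> w \<le> C \<Longrightarrow>
      f t x w - f t x v \<le> - \<alpha> * (w - v)"
    using nonlin_hyp_uniformly_decreasing[OF nl, of c C] \<open>0 < c\<close> unfolding S_def by auto
  interpret bounded_positive_solution S u "\<lambda>t x. LINT y:D|lborel. \<kappa> (y - x) * u t y" f c C \<alpha>
  proof (rule set_kernel_average_bounded_positive_solution[OF ker \<open>S \<noteq> {}\<close> \<open>D \<subseteq> S\<close> \<open>0 < c\<close> u_range
        _ _ _ _ \<open>0 < \<alpha>\<close> f_decreasing])
    show "(\<lambda>y. indicator D y * u t y) \<in> borel_measurable borel" for t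
      using measurable_indicator_mult_slice[OF meas[folded S_def] \<open>closed S\<close> \<open>D \<in> sets borel\<close> \<open>D \<subseteq> S\<close>] .
    show "uniformly_continuous_on (UNIV \<times> S \<times> {c..C}) (\<lambda>(t, x, v). f t x v)"
      "bounded ((\<lambda>(t, x, v). f t x v) ` (UNIV \<times> S \<times> {c..C}))"
      using nl bounded_closed_interval[of c C] unfolding nonlin_hyp_def S_def by blast+
    show "((\<lambda>s. u s x) has_real_derivative
        (LINT y:D|lborel. \<kappa> (y - x) * u t y) + u t x * f t x (u t x)) (at t)" if "x \<in> S" for t x
      using eqn that unfolding S_def by blast
  qed
  show ?thesis
    using u_uniformly_continuous u_in_X u_has_X_derivative unfolding rhs_def S_def by blast
qed

end
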